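(* Let $L\in\mathcal L(C_6)$ with $\{2,5\}\subset L$. Then $L=\{2,5\}$ or $L=\{2,4,5\}$, and both sets actually lie in $\mathcal L(C_6)$. In particular, $[2,5]\notin\mathcal L(C_6)$.
   Context: $C_n$ denotes a cyclic group of order $n$; $[a,b]=\{x\in\mathbb Z:a\le x\le b\}$. For a subset $G_0$ of a finite abelian group $G$, a sequence over $G_0$ is an element of the free abelian monoid $\mathcal F(G_0)$ with basis $G_0$ (a finite unordered list of elements of $G_0$, repetitions allowed). $\mathcal B(G_0)$ is the monoid of zero-sum sequences over $G_0$ (including the empty sequence). An atom is a minimal zero-sum sequence, i.e. a nonempty zero-sum sequence that is not a product of two nonempty zero-sum sequences. For $B\in\mathcal B(G_0)$, $\mathsf L(B)=\{k\in\mathbb N_0: B \text{ is a product of } k \text{ atoms}\}$, and $\mathcal L(G_0)=\{\mathsf L(B):B\in\mathcal B(G_0)\}$; $\mathcal L(G)$ is the case $G_0=G$. *)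

theory Defs
  imports Main "HOL-Library.Multiset" "HOL-Library.Numeral_Type"
begin

text \<open>Sequences over G0 are finite multisets with support in G0.
  The cyclic group C_6 is modelled as the additive group of the numeral type 6
  (integers modulo 6).\<close>

definition seqs :: "'a set \<Rightarrow> 'a multiset set" where
  "seqs G0 = {S. set_mset S \<subseteq> G0}"

definition zero_sum_seqs :: "('a::comm_monoid_add) set \<Rightarrow> 'a multiset set" where
  "zero_sum_seqs G0 = {S. S \<in> seqs G0 \<and> sum_mset S = 0}"

definition is_atom :: "('a::comm_monoid_add) set \<Rightarrow> 'a multiset \<Rightarrow> bool" where
  "is_atom G0 A \<longleftrightarrow> A \<in> zero_sum_seqs G0 \<and> A \<noteq> {#} \<and>
     \<not> (\<exists>S T. S \<in> zero_sum_seqs G0 \<and> T \<in> zero_sum_seqs G0 \<and> S \<noteq> {#} \<and> T \<noteq> {#} \<and> A = S + T)"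

definition length_set :: "('a::comm_monoid_add) set \<Rightarrow> 'a multiset \<Rightarrow> nat set" where
  "length_set G0 B = {k. \<exists>F :: 'a multiset multiset.
      size F = k \<and> (\<forall>A\<in>#F. is_atom G0 A) \<and> sum_mset F = B}"

definition system_of_length_sets :: "('a::comm_monoid_add) set \<Rightarrow> nat set set" where
  "system_of_length_sets G0 = {length_set G0 B | B. B \<in> zero_sum_seqs G0}"

end

theory Submission
  imports Defs
begin

text \<open>A zero-sum sequence B over C_6 whose length set contains 2 is a product U V of two
  atoms. As every sequence of length |G| has a nonempty zero-sum subsequence, atoms over C_6
  have length at most 6; there are exactly twenty of them, so there are only finitely many such
  B, and their length sets are computed exhaustively by repeatedly splitting off an atom.\<close>

lemma zero_sum_seqs_UNIV: "zero_sum_seqs UNIV = {S. sum_mset S = 0}"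
  by (simp add: zero_sum_seqs_def seqs_def)

lemma submset_in_seqs: "S \<subseteq># A \<Longrightarrow> A \<in> seqs G0 \<Longrightarrow> S \<in> seqs G0"
  by (auto simp: seqs_def dest: set_mset_mono)

lemma is_atom_iff_no_proper_zero_sum_submset:
  fixes A :: "'a::comm_monoid_add multiset"
  shows "is_atom G0 A \<longleftrightarrow> A \<in> zero_sum_seqs G0 \<and> A \<noteq> {#} \<and>
    (\<forall>S. S \<subseteq># A \<longrightarrow> S \<noteq> {#} \<longrightarrow> S \<noteq> A \<longrightarrow> sum_mset S \<noteq> 0)"
    (is "_ \<longleftrightarrow> ?zero_sum \<and> ?nonempty \<and> ?minimal")
proof
  assume atom: "is_atom G0 A"
  then have A: "A \<in> seqs G0" "sum_mset A = 0"
    by (simp_all add: is_atom_def zero_sum_seqs_def)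
  have "sum_mset S \<noteq> 0" if S: "S \<subseteq># A" "S \<noteq> {#}" "S \<noteq> A" for S
  proof
    assume S0: "sum_mset S = 0"
    have split: "A = S + (A - S)"
      using S(1) by (simp add: subset_mset.add_diff_inverse)
    then have "sum_mset (A - S) = 0"
      using A(2) S0 by (metis add_0 sum_mset.union)
    moreover have "A - S \<noteq> {#}"
      using split S(3) by auto
    moreover have "S \<in> seqs G0" "A - S \<in> seqs G0"
      using submset_in_seqs[OF S(1) A(1)] submset_in_seqs[OF _ A(1)] by simp_all
    ultimately show False
      using atom S(2) S0 split unfolding is_atom_def zero_sum_seqs_def by blast
  qed
  with atom show "?zero_sum \<and> ?nonempty \<and> ?minimal"
    by (simp add: is_atom_def)
next
  assume A: "?zero_sum \<and> ?nonempty \<and> ?minimal"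
  have "\<not> (sum_mset S = 0 \<and> S \<noteq> {#} \<and> T \<noteq> {#} \<and> A = S + T)" for S T
    using A by auto
  with A show "is_atom G0 A"
    unfolding is_atom_def zero_sum_seqs_def by blast
qed

text \<open>Two of the CARD('a) + 1 prefix sums of an enumeration of A coincide.\<close>

lemma short_zero_sum_submset:
  fixes A :: "'a::{finite,ab_group_add} multiset"
  assumes "CARD('a) \<le> size A"
  obtains S where "S \<subseteq># A" "S \<noteq> {#}" "size S \<le> CARD('a)" "sum_mset S = 0"
proof -
  obtain xs where A: "A = mset xs"
    using ex_mset by metis
  define p where "p i = sum_list (take i xs)" for i
  have "\<not> inj_on p {0..CARD('a)}"
  proof
    assume "inj_on p {0..CARD('a)}"
    then have "card (p ` {0..CARD('a)}) = Suc CARD('a)"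
      by (simp add: card_image)
    moreover have "card (p ` {0..CARD('a)}) \<le> CARD('a)"
      by (rule card_mono) auto
    ultimately show False
      by simp
  qed
  then obtain i j where ij: "i < j" "j \<le> CARD('a)" "p i = p j"
    unfolding inj_on_def by (metis atLeastAtMost_iff linorder_neqE_nat)
  define S where "S = mset (drop i (take j xs))"
  have split: "take j xs = take i xs @ drop i (take j xs)"
    using ij(1) by (metis append_take_drop_id min.strict_order_iff take_take)
  have "mset xs = mset (take i xs) + S + mset (drop j xs)"
    unfolding S_def by (metis append_take_drop_id mset_append split)
  then have "S \<subseteq># A"
    unfolding A by (metis mset_subset_eq_add_left mset_subset_eq_add_right subset_mset.order_trans)
  moreover have "size S = j - i"
    using ij assms A unfolding S_def by simp
  moreover have "sum_mset S = 0"
    using ij(3) unfolding p_def S_def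
    by (subst (asm) split) (simp add: sum_mset_sum_list)
  ultimately show thesis
    using ij by (intro that) auto
qed

lemma atom_size_le_card:
  fixes A :: "'a::{finite,ab_group_add} multiset"
  assumes "is_atom G0 A"
  shows "size A \<le> CARD('a)"
proof (rule ccontr)
  assume long: "\<not> size A \<le> CARD('a)"
  then obtain S where "S \<subseteq># A" "S \<noteq> {#}" "size S \<le> CARD('a)" "sum_mset S = 0"
    using short_zero_sum_submset by (metis nat_le_linear)
  moreover have "S \<noteq> A"
    using long \<open>size S \<le> CARD('a)\<close> by auto
  ultimately show False
    using assms by (auto simp: is_atom_iff_no_proper_zero_sum_submset)
qed

lemma length_set_empty: "length_set G0 {#} = {0}"
proof -
  have "F = {#}" if "\<forall>A\<in>#F. is_atom G0 A" "sum_mset F = {#}" for F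
  proof (rule ccontr)
    assume "F \<noteq> {#}"
    then obtain A F' where "F = add_mset A F'"
      by (metis multiset_cases)
    then show False
      using that by (simp add: is_atom_def)
  qed
  then show ?thesis
    unfolding length_set_def by (auto intro!: exI[of _ "{#}"])
qed

lemma length_set_split_atom:
  assumes "x \<in># B"
  shows "length_set G0 B =
    {Suc k | k A. is_atom G0 A \<and> A \<subseteq># B \<and> x \<in># A \<and> k \<in> length_set G0 (B - A)}"
proof (intro set_eqI iffI)
  fix m assume "m \<in> length_set G0 B"
  then obtain F where F: "size F = m" "\<forall>A\<in>#F. is_atom G0 A" "sum_mset F = B"
    unfolding length_set_def by blast
  then obtain A where A: "A \<in># F" "x \<in># A"
    using assms by (metis in_Union_mset_iff)
  then obtain F' where F': "F = add_mset A F'"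
    by (metis multi_member_split)
  then have "A \<subseteq># B" "B - A = sum_mset F'"
    using F(3) by auto
  moreover have "size F' \<in> length_set G0 (B - A)"
    using F F' \<open>B - A = sum_mset F'\<close> unfolding length_set_def by auto
  moreover have "m = Suc (size F')" "is_atom G0 A"
    using F F' by auto
  ultimately show "m \<in> {Suc k | k A. is_atom G0 A \<and> A \<subseteq># B \<and> x \<in># A \<and> k \<in> length_set G0 (B - A)}"
    using A(2) by blast
next
  fix m assume "m \<in> {Suc k | k A. is_atom G0 A \<and> A \<subseteq># B \<and> x \<in># A \<and> k \<in> length_set G0 (B - A)}"
  then obtain k A F where "m = Suc k" "is_atom G0 A" "A \<subseteq># B"
    "size F = k" "\<forall>A\<in>#F. is_atom G0 A" "sum_mset F = B - A"
    unfolding length_set_def by blast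
  then show "m \<in> length_set G0 B"
    unfolding length_set_def
    by (intro CollectI exI[of _ "add_mset A F"]) (auto simp: subset_mset.add_diff_inverse)
qed

lemma two_in_length_setE:
  assumes "2 \<in> length_set G0 B"
  obtains U V where "is_atom G0 U" "is_atom G0 V" "B = U + V"
proof -
  obtain F where F: "size F = 2" "\<forall>A\<in>#F. is_atom G0 A" "sum_mset F = B"
    using assms unfolding length_set_def by blast
  then obtain U F' where "F = add_mset U F'" "size F' = 1"
    by (metis Suc_1 size_eq_Suc_imp_eq_union size_add_mset nat.inject)
  then obtain V where "F = {#U, V#}"
    using size_1_singleton_mset by blast
  with F have "is_atom G0 U" "is_atom G0 V" "B = U + V"
    by auto
  then show thesis
    by (rule that)
qed

lemma UNIV_6: "(UNIV :: 6 set) = {0, 1, 2, 3, 4, 5}"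
proof -
  have "{0, 1, 2, 3, 4, 5 :: 6} = UNIV"
    by (rule card_subset_eq) simp_all
  then show ?thesis
    by simp
qed

lemma all_6: "(\<forall>x::6. P x) \<longleftrightarrow> P 0 \<and> P 1 \<and> P 2 \<and> P 3 \<and> P 4 \<and> P 5"
  by (metis UNIV_6 UNIV_I insert_iff singletonD)

lemma length_6_cases:
  assumes "length c = 6"
  obtains a b d e f g where "c = [a, b, d, e, f, g]"
  using assms by (simp add: length_Suc_conv numeral_eq_Suc) blast

definition of_counts :: "nat list \<Rightarrow> 6 multiset" where
  "of_counts c = replicate_mset (c!0) 0 + replicate_mset (c!1) 1 + replicate_mset (c!2) 2
     + replicate_mset (c!3) 3 + replicate_mset (c!4) 4 + replicate_mset (c!5) 5"

definition counts :: "6 multiset \<Rightarrow> nat list" where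
  "counts B = [count B 0, count B 1, count B 2, count B 3, count B 4, count B 5]"

definition zero_sum_counts :: "nat list \<Rightarrow> bool" where
  "zero_sum_counts c \<longleftrightarrow> (c!1 + 2 * c!2 + 3 * c!3 + 4 * c!4 + 5 * c!5) mod 6 = 0"

lemma length_counts [simp]: "length (counts B) = 6"
  by (simp add: counts_def)

lemma counts_of_counts: "length c = 6 \<Longrightarrow> counts (of_counts c) = c"
  by (elim length_6_cases) (simp add: counts_def of_counts_def)

lemma of_counts_counts [simp]: "of_counts (counts B) = B"
  by (simp add: multiset_eq_iff all_6 counts_def of_counts_def)

lemma of_counts_inject:
  "length c = 6 \<Longrightarrow> length d = 6 \<Longrightarrow> of_counts c = of_counts d \<longleftrightarrow> c = d"
  by (metis counts_of_counts)

lemma count_of_counts: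
  assumes "length c = 6" "i < 6"
  shows "count (of_counts c) (of_nat i) = c ! i"
proof -
  have "i = 0 \<or> i = 1 \<or> i = 2 \<or> i = 3 \<or> i = 4 \<or> i = 5"
    using assms(2) by arith
  with assms(1) show ?thesis
    by (elim length_6_cases disjE) (simp_all add: of_counts_def)
qed

lemma size_of_counts: "length c = 6 \<Longrightarrow> size (of_counts c) = sum_list c"
  by (elim length_6_cases) (simp add: of_counts_def)

lemma sum_mset_of_counts_eq_0_iff:
  assumes "length c = 6"
  shows "sum_mset (of_counts c) = 0 \<longleftrightarrow> zero_sum_counts c"
proof -
  obtain a b d e f g where c: "c = [a, b, d, e, f, g]"
    using assms by (rule length_6_cases)
  have "sum_mset (of_counts c) = of_nat (b + 2 * d + 3 * e + 4 * f + 5 * g)"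
    by (simp add: c of_counts_def algebra_simps)
  then have "sum_mset (of_counts c) = 0 \<longleftrightarrow> CHAR(6) dvd (b + 2 * d + 3 * e + 4 * f + 5 * g)"
    by (simp only: of_nat_eq_0_iff_char_dvd)
  then show ?thesis
    by (simp add: zero_sum_counts_def c dvd_eq_mod_eq_0)
qed

lemma of_counts_subseteq_iff:
  "length c = 6 \<Longrightarrow> length d = 6 \<Longrightarrow> of_counts c \<subseteq># of_counts d \<longleftrightarrow> list_all2 (\<le>) c d"
  by (elim length_6_cases) (simp add: subseteq_mset_def all_6 of_counts_def)

lemma of_counts_plus:
  "length c = 6 \<Longrightarrow> length d = 6 \<Longrightarrow> of_counts c + of_counts d = of_counts (map2 (+) c d)"
  by (elim length_6_cases) (simp add: multiset_eq_iff all_6 of_counts_def)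

lemma of_counts_minus:
  "length c = 6 \<Longrightarrow> length d = 6 \<Longrightarrow> of_counts d - of_counts c = of_counts (map2 (-) d c)"
  by (elim length_6_cases) (simp add: multiset_eq_iff all_6 of_counts_def)

primrec sub_counts :: "nat list \<Rightarrow> nat list list" where
  "sub_counts [] = [[]]"
| "sub_counts (x # xs) = concat (map (\<lambda>i. map (Cons i) (sub_counts xs)) [0..<Suc x])"

primrec bounded_counts :: "nat \<Rightarrow> nat \<Rightarrow> nat list list" where
  "bounded_counts 0 s = [[]]"
| "bounded_counts (Suc n) s =
     concat (map (\<lambda>i. map (Cons i) (bounded_counts n (s - i))) [0..<Suc s])"

lemma set_sub_counts: "d \<in> set (sub_counts c) \<longleftrightarrow> list_all2 (\<le>) d c"
proof (induction c arbitrary: d)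
  case Nil
  then show ?case by auto
next
  case (Cons x xs)
  then show ?case
    by (cases d) (auto simp: image_iff less_Suc_eq_le simp del: upt_Suc)
qed

lemma set_bounded_counts: "c \<in> set (bounded_counts n s) \<longleftrightarrow> length c = n \<and> sum_list c \<le> s"
proof (induction n arbitrary: c s)
  case 0
  then show ?case by auto
next
  case (Suc n)
  then show ?case
    by (cases c) (auto simp: image_iff less_Suc_eq_le simp del: upt_Suc)
qed

definition is_atom_counts :: "nat list \<Rightarrow> bool" where
  "is_atom_counts c \<longleftrightarrow> 0 < sum_list c \<and> zero_sum_counts c \<and>
     (\<forall>d\<in>set (sub_counts c). 0 < sum_list d \<and> d \<noteq> c \<longrightarrow> \<not> zero_sum_counts d)"

lemma length_sub_counts: "d \<in> set (sub_counts c) \<Longrightarrow> length d = length c"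
  by (simp add: set_sub_counts list_all2_lengthD)

lemma all_submset_of_counts:
  assumes "length c = 6"
  shows "(\<forall>S. S \<subseteq># of_counts c \<longrightarrow> P S) \<longleftrightarrow> (\<forall>d\<in>set (sub_counts c). P (of_counts d))"
proof
  assume "\<forall>S. S \<subseteq># of_counts c \<longrightarrow> P S"
  then show "\<forall>d\<in>set (sub_counts c). P (of_counts d)"
    using assms length_sub_counts of_counts_subseteq_iff by (metis set_sub_counts)
next
  assume P: "\<forall>d\<in>set (sub_counts c). P (of_counts d)"
  show "\<forall>S. S \<subseteq># of_counts c \<longrightarrow> P S"
  proof (intro allI impI)
    fix S assume "S \<subseteq># of_counts c"
    then have "counts S \<in> set (sub_counts c)"
      using assms of_counts_subseteq_iff[of "counts S" c] by (simp add: set_sub_counts)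
    then show "P S"
      using P by fastforce
  qed
qed

lemma of_counts_eq_empty_iff: "length c = 6 \<Longrightarrow> of_counts c = {#} \<longleftrightarrow> sum_list c = 0"
  by (metis size_eq_0_iff_empty size_of_counts)

lemma is_atom_of_counts_iff:
  assumes "length c = 6"
  shows "is_atom UNIV (of_counts c) \<longleftrightarrow> is_atom_counts c"
proof -
  have "(of_counts d \<noteq> {#} \<longrightarrow> of_counts d \<noteq> of_counts c \<longrightarrow> sum_mset (of_counts d) \<noteq> 0)
      \<longleftrightarrow> (0 < sum_list d \<and> d \<noteq> c \<longrightarrow> \<not> zero_sum_counts d)"
    if "d \<in> set (sub_counts c)" for d
  proof -
    have "length d = 6"
      using that assms length_sub_counts by metis
    then show ?thesis
      using assms of_counts_eq_empty_iff of_counts_inject sum_mset_of_counts_eq_0_iff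
      by (metis gr0I less_nat_zero_code)
  qed
  moreover have "of_counts c \<noteq> {#} \<longleftrightarrow> 0 < sum_list c"
    using assms of_counts_eq_empty_iff by (metis gr0I less_nat_zero_code)
  ultimately show ?thesis
    using assms
    unfolding is_atom_iff_no_proper_zero_sum_submset all_submset_of_counts[OF assms]
      is_atom_counts_def zero_sum_seqs_UNIV mem_Collect_eq sum_mset_of_counts_eq_0_iff[OF assms]
    by (metis (no_types, lifting))
qed

definition atoms_C6 :: "nat list list" where
  "atoms_C6 = [[1,0,0,0,0,0], [0,0,0,2,0,0], [0,0,1,0,1,0], [0,1,0,0,0,1],
     [0,0,0,0,3,0], [0,0,0,1,1,1], [0,0,1,0,0,2], [0,0,3,0,0,0], [0,1,1,1,0,0],
     [0,2,0,0,1,0], [0,0,0,0,2,2], [0,0,0,1,0,3], [0,0,2,1,0,1], [0,1,0,1,2,0],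
     [0,2,2,0,0,0], [0,3,0,1,0,0], [0,0,0,0,1,4], [0,4,1,0,0,0], [0,0,0,0,0,6],
     [0,6,0,0,0,0]]"

lemma atoms_C6_complete: "\<forall>c\<in>set (bounded_counts 6 6). is_atom_counts c \<longrightarrow> c \<in> set atoms_C6"
  by code_simp

lemma atoms_C6_sound: "\<forall>c\<in>set atoms_C6. length c = 6 \<and> is_atom_counts c"
  by code_simp

lemma is_atom_of_counts_atoms_C6:
  "a \<in> set atoms_C6 \<Longrightarrow> length a = 6 \<and> is_atom UNIV (of_counts a)"
  using atoms_C6_sound is_atom_of_counts_iff by blast

lemma is_atom_iff_counts_in_atoms_C6: "is_atom UNIV A \<longleftrightarrow> counts A \<in> set atoms_C6"
proof
  assume atom: "is_atom UNIV A"
  then have "size A \<le> 6"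
    using atom_size_le_card[OF atom] by simp
  then have "counts A \<in> set (bounded_counts 6 6)"
    using size_of_counts[of "counts A"] by (simp add: set_bounded_counts)
  moreover have "is_atom_counts (counts A)"
    using atom is_atom_of_counts_iff[of "counts A"] by simp
  ultimately show "counts A \<in> set atoms_C6"
    using atoms_C6_complete by blast
next
  assume "counts A \<in> set atoms_C6"
  then show "is_atom UNIV A"
    using is_atom_of_counts_atoms_C6 by fastforce
qed

lemma atoms_below_containing_C6:
  assumes "length c = 6" "p < 6"
  shows "{A. is_atom UNIV A \<and> A \<subseteq># of_counts c \<and> of_nat p \<in># A} =
    of_counts ` {a \<in> set atoms_C6. 0 < a ! p \<and> list_all2 (\<le>) a c}"
proof -
  have mem_iff: "of_nat p \<in># of_counts a \<longleftrightarrow> 0 < a ! p" if "length a = 6" for a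
    using count_of_counts[OF that assms(2)] by (metis count_greater_zero_iff)
  show ?thesis
  proof (intro set_eqI iffI)
    fix A assume "A \<in> {A. is_atom UNIV A \<and> A \<subseteq># of_counts c \<and> of_nat p \<in># A}"
    then have "counts A \<in> set atoms_C6" "list_all2 (\<le>) (counts A) c" "0 < counts A ! p"
      using assms(1) of_counts_subseteq_iff[of "counts A" c] mem_iff[of "counts A"]
      by (simp_all add: is_atom_iff_counts_in_atoms_C6)
    then show "A \<in> of_counts ` {a \<in> set atoms_C6. 0 < a ! p \<and> list_all2 (\<le>) a c}"
      by (metis (mono_tags, lifting) image_eqI mem_Collect_eq of_counts_counts)
  next
    fix A assume "A \<in> of_counts ` {a \<in> set atoms_C6. 0 < a ! p \<and> list_all2 (\<le>) a c}"
    then obtain a where "A = of_counts a" "a \<in> set atoms_C6" "0 < a ! p" "list_all2 (\<le>) a c"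
      by blast
    then show "A \<in> {A. is_atom UNIV A \<and> A \<subseteq># of_counts c \<and> of_nat p \<in># A}"
      using assms(1) is_atom_of_counts_atoms_C6 of_counts_subseteq_iff mem_iff by blast
  qed
qed

definition first_nonzero :: "nat list \<Rightarrow> nat" where
  "first_nonzero c = length (takeWhile (\<lambda>x. x = 0) c)"

lemma first_nonzero:
  assumes "sum_list c \<noteq> 0"
  shows "first_nonzero c < length c" "0 < c ! first_nonzero c"
proof -
  have "takeWhile (\<lambda>x. x = 0) c \<noteq> c"
    using assms by (auto simp: takeWhile_eq_all_conv)
  then show "first_nonzero c < length c"
    unfolding first_nonzero_def
    by (metis le_neq_implies_less length_takeWhile_le takeWhile_eq_take take_all)
  then show "0 < c ! first_nonzero c"
    unfolding first_nonzero_def using nth_length_takeWhile by blast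
qed

text \<open>lengths n c computes the length set of the sequence with multiplicity vector c whenever
  the fuel n is at least its size: every factorization has an atom containing the first
  element occurring in c, so it suffices to split off such atoms.\<close>

primrec lengths :: "nat \<Rightarrow> nat list \<Rightarrow> nat list" where
  "lengths 0 c = (if sum_list c = 0 then [0] else [])"
| "lengths (Suc n) c = (if sum_list c = 0 then [0] else
     remdups (concat (map (\<lambda>a. map Suc (lengths n (map2 (-) c a)))
       (filter (\<lambda>a. 0 < a ! first_nonzero c \<and> list_all2 (\<le>) a c) atoms_C6))))"

lemma set_lengths_Suc:
  assumes "sum_list c \<noteq> 0"
  shows "set (lengths (Suc n) c) = {Suc k | k a. a \<in> set atoms_C6 \<and> 0 < a ! first_nonzero c
    \<and> list_all2 (\<le>) a c \<and> k \<in> set (lengths n (map2 (-) c a))}"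
  using assms by auto

lemma set_lengths:
  assumes "length c = 6" "sum_list c \<le> n"
  shows "set (lengths n c) = length_set UNIV (of_counts c)"
  using assms
proof (induction n arbitrary: c)
  case 0
  then have "of_counts c = {#}" "sum_list c = 0"
    using of_counts_eq_empty_iff by simp_all
  then show ?case
    by (simp only: lengths.simps if_True length_set_empty) simp
next
  case (Suc n)
  show ?case
  proof (cases "sum_list c = 0")
    case True
    then have "of_counts c = {#}"
      using Suc.prems of_counts_eq_empty_iff by simp
    then show ?thesis
      by (simp only: lengths.simps True if_True length_set_empty) simp
  next
    case False
    define p where "p = first_nonzero c"
    let ?atoms = "{a \<in> set atoms_C6. 0 < a ! p \<and> list_all2 (\<le>) a c}"
    have p: "p < 6" "0 < c ! p"
      using first_nonzero[OF False] Suc.prems(1) unfolding p_def by simp_all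
    have "of_nat p \<in># of_counts c"
      using count_of_counts[OF Suc.prems(1) p(1)] p(2) by (metis count_greater_zero_iff)
    have IH: "length_set UNIV (of_counts c - of_counts a) = set (lengths n (map2 (-) c a))"
      if a: "a \<in> ?atoms" for a
    proof -
      have atom: "length a = 6" "is_atom UNIV (of_counts a)"
        using a is_atom_of_counts_atoms_C6 by simp_all
      then have sub: "of_counts a \<subseteq># of_counts c"
        using a Suc.prems(1) of_counts_subseteq_iff by blast
      have "0 < size (of_counts a)"
        using atom(2) by (simp add: is_atom_def nonempty_has_size)
      then have "size (of_counts c - of_counts a) \<le> n"
        using size_Diff_submset[OF sub] size_of_counts[OF Suc.prems(1)] Suc.prems(2) by linarith
      then show ?thesis
        using Suc.IH[of "map2 (-) c a"] Suc.prems(1) atom(1) of_counts_minus size_of_counts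
        by simp
    qed
    have "length_set UNIV (of_counts c) = {Suc k | k A. A \<in> of_counts ` ?atoms
        \<and> k \<in> length_set UNIV (of_counts c - A)}"
      unfolding length_set_split_atom[OF \<open>of_nat p \<in># of_counts c\<close>]
        atoms_below_containing_C6[OF Suc.prems(1) p(1), symmetric] by simp
    also have "\<dots> = {Suc k | k a. a \<in> ?atoms \<and> k \<in> set (lengths n (map2 (-) c a))}"
      using IH by blast
    also have "\<dots> = set (lengths (Suc n) c)"
      unfolding set_lengths_Suc[OF False] p_def by simp
    finally show ?thesis ..
  qed
qed

lemma lengths_of_atom_pairs_C6:
  "\<forall>u\<in>set atoms_C6. \<forall>v\<in>set atoms_C6. let L = set (lengths 12 (map2 (+) u v)) in
     {2, 5} \<subseteq> L \<longrightarrow> L = {2, 5} \<or> L = {2, 4, 5}"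
  by code_simp

lemma length_set_C6_containing_2_5:
  fixes B :: "6 multiset"
  assumes "{2, 5} \<subseteq> length_set UNIV B"
  shows "length_set UNIV B = {2, 5} \<or> length_set UNIV B = {2, 4, 5}"
proof -
  obtain U V where atoms: "is_atom UNIV U" "is_atom UNIV V" and B: "B = U + V"
    using assms two_in_length_setE by blast
  define w where "w = map2 (+) (counts U) (counts V)"
  have w: "length w = 6" "B = of_counts w"
    unfolding w_def B using of_counts_plus[of "counts U" "counts V"] by simp_all
  have "size U \<le> 6" "size V \<le> 6"
    using atoms atom_size_le_card by fastforce+
  moreover have "sum_list w = size U + size V"
    using w B size_of_counts by (metis size_union)
  ultimately have "sum_list w \<le> 12"
    by simp
  then have "length_set UNIV B = set (lengths 12 w)"
    using set_lengths w by simp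
  moreover have "counts U \<in> set atoms_C6" "counts V \<in> set atoms_C6"
    using atoms is_atom_iff_counts_in_atoms_C6 by blast+
  ultimately show ?thesis
    using assms lengths_of_atom_pairs_C6 unfolding w_def Let_def by simp
qed

lemma lengths_witnesses:
  "set (lengths 11 [0, 4, 1, 0, 0, 6]) = {2, 5}" "set (lengths 11 [0, 4, 1, 0, 1, 4]) = {2, 4, 5}"
  by code_simp+

theorem lemma3p1:
  shows "(\<forall>L \<in> system_of_length_sets (UNIV :: 6 set).
            {2, 5} \<subseteq> L \<longrightarrow> L = {2, 5} \<or> L = {2, 4, 5})
       \<and> {2, 5} \<in> system_of_length_sets (UNIV :: 6 set)
       \<and> {2, 4, 5} \<in> system_of_length_sets (UNIV :: 6 set)
       \<and> {2..5} \<notin> system_of_length_sets (UNIV :: 6 set)"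
proof -
  have classification: "\<forall>L \<in> system_of_length_sets (UNIV :: 6 set).
      {2, 5} \<subseteq> L \<longrightarrow> L = {2, 5} \<or> L = {2, 4, 5}"
    using length_set_C6_containing_2_5 unfolding system_of_length_sets_def by blast
  have realized: "set (lengths 11 c) \<in> system_of_length_sets (UNIV :: 6 set)"
    if "length c = 6" "zero_sum_counts c" "sum_list c \<le> 11" for c
    using that set_lengths sum_mset_of_counts_eq_0_iff
    unfolding system_of_length_sets_def zero_sum_seqs_UNIV by auto
  have "{2, 5} \<in> system_of_length_sets (UNIV :: 6 set)"
    using realized[of "[0, 4, 1, 0, 0, 6]"] lengths_witnesses by (simp add: zero_sum_counts_def)
  moreover have "{2, 4, 5} \<in> system_of_length_sets (UNIV :: 6 set)"
    using realized[of "[0, 4, 1, 0, 1, 4]"] lengths_witnesses by (simp add: zero_sum_counts_def)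
  moreover have "3 \<in> {2..5 :: nat}" "3 \<notin> {2, 5 :: nat}" "3 \<notin> {2, 4, 5 :: nat}"
      "{2, 5} \<subseteq> {2..5 :: nat}"
    by simp_all
  ultimately show ?thesis
    using classification by blast
qed

end
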